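(* Let $b\ge 1$ and, for $i\in[b]=\{1,\dots,b\}$, let $\mathcal X_i=\mathbb R^{m_i\times n_i}$ be equipped with the trace inner product $\langle X_i,Y_i\rangle_{(i)}=\operatorname{tr}(X_i^\top Y_i)$ and an arbitrary norm $\|\cdot\|_{(i)}$ with dual norm $\|Y_i\|_{(i)\star}=\sup_{\|Z_i\|_{(i)}\le 1}\langle Y_i,Z_i\rangle_{(i)}$. Let $\mathcal X=\mathcal X_1\times\cdots\times\mathcal X_b$ with elements $X=[X_1,\dots,X_b]$ and inner product $\langle X,Y\rangle=\sum_i\langle X_i,Y_i\rangle_{(i)}$. Let $f:\mathcal X\to\mathbb R$ be continuously differentiable, with $i$-th gradient block $\nabla_i f(X)\in\mathcal X_i$, and assume there is $f^\star\in\mathbb R$ with $f(X)\ge f^\star$ for all $X\in\mathcal X$. Let $p_1,\dots,p_b\ge 0$ with $\sum_{i=1}^b p_i=1$ and $p_1>0$, and let $\mathcal D$ be the distribution of the random set $\{s,\dots,b\}$ where $s\in[b]$ is drawn with $\Pr(s=i)=p_i$ (randomized progressive training). Assume $f$ is $\operatorname{supp}(\mathcal D)$-layer-wise $L^0$-smooth: there are constants $L^0_{i,S}\ge 0$ ($i\in[b]$, $S\in\operatorname{supp}(\mathcal D)$), with $L^0_{i,S}=0$ for $i\notin S$, such that for every $S\in\operatorname{supp}(\mathcal D)$, all $X\in\mathcal X$ and all $\Gamma=[\Gamma_1,\dots,\Gamma_b]\in\mathcal X$ with $\Gamma_i=0$ for $i\notin S$, $$f(X+\Gamma)-f(X)-\langle\nabla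 f(X),\Gamma\rangle\le\sum_{i\in S}\frac{L^0_{i,S}}{2}\|\Gamma_i\|_{(i)}^2 .$$ Consider the iterates $\{X^k\}$ generated from $X^0\in\mathcal X$ as follows: for $k=0,1,\dots$, draw $S^k\sim\mathcal D$ independently of the past, set $X_i^{k+1}=X_i^k-\gamma_i^k(\nabla_i f(X^k))^\sharp$ for $i\in S^k$ and $X_i^{k+1}=X_i^k$ for $i\notin S^k$, with stepsizes $\gamma_i^k=1/L^0_{i,S^k}$. Then for every $K\ge 1$, $$\frac1K\sum_{k=0}^{K-1}\sum_{i=1}^b\frac{w_i}{\frac1b\sum_{j=1}^b w_j}\,\mathbb E\big[\|\nabla_i f(X^k)\|_{(i)\star}^2\big]\le\frac{f(X^0)-f^\star}{K\left(\frac1b\sum_{j=1}^b w_j\right)},\qquad w_i:=\sum_{s=1}^i\frac{p_s}{2L^0_{i,\{s,\dots,b\}}}.$$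
   Context: For $G\in\mathcal X_i$, $G^\sharp$ (the sharp operator) denotes an element of $\arg\max_{Z\in\mathcal X_i}\{\langle G,Z\rangle_{(i)}-\tfrac12\|Z\|_{(i)}^2\}$. $\operatorname{supp}(\mathcal D)$ is the collection of subsets of $[b]$ having positive probability under $\mathcal D$; here it is $\{\{j,\dots,b\}:p_j>0\}$. Expectations are over the random sets $S^k$. *)

theory Defs
  imports Complex_Main
begin

text \<open>A block X_i in R^(m_i x n_i) is represented as a function nat => nat => real
  that vanishes outside the index range {..<m i} x {..<n i}.
  A point X = [X_1,...,X_b] of the product space is a function from block indices
  (1..b) to blocks, equal to the zero matrix outside 1..b.\<close>

type_synonym mat = "nat \<Rightarrow> nat \<Rightarrow> real"
type_synonym bvec = "nat \<Rightarrow> mat"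

definition zmat :: mat where "zmat = (\<lambda>r c. 0)"

definition blk :: "(nat \<Rightarrow> nat) \<Rightarrow> (nat \<Rightarrow> nat) \<Rightarrow> nat \<Rightarrow> mat set" where
  "blk m n i = {M. \<forall>r c. (m i \<le> r \<or> n i \<le> c) \<longrightarrow> M r c = 0}"

definition inner_blk :: "(nat \<Rightarrow> nat) \<Rightarrow> (nat \<Rightarrow> nat) \<Rightarrow> nat \<Rightarrow> mat \<Rightarrow> mat \<Rightarrow> real" where
  "inner_blk m n i M N = (\<Sum>r<m i. \<Sum>c<n i. M r c * N r c)"

definition madd :: "mat \<Rightarrow> mat \<Rightarrow> mat" where "madd M N = (\<lambda>r c. M r c + N r c)"
definition msub :: "mat \<Rightarrow> mat \<Rightarrow> mat" where "msub M N = (\<lambda>r c. M r c - N r c)"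
definition mscale :: "real \<Rightarrow> mat \<Rightarrow> mat" where "mscale a M = (\<lambda>r c. a * M r c)"

definition bspace :: "nat \<Rightarrow> (nat \<Rightarrow> nat) \<Rightarrow> (nat \<Rightarrow> nat) \<Rightarrow> bvec set" where
  "bspace b m n = {X. \<forall>i. (i \<in> {1..b} \<longrightarrow> X i \<in> blk m n i) \<and> (i \<notin> {1..b} \<longrightarrow> X i = zmat)}"

definition badd :: "bvec \<Rightarrow> bvec \<Rightarrow> bvec" where "badd X Y = (\<lambda>i. madd (X i) (Y i))"
definition bsub :: "bvec \<Rightarrow> bvec \<Rightarrow> bvec" where "bsub X Y = (\<lambda>i. msub (X i) (Y i))"

definition binner :: "nat \<Rightarrow> (nat \<Rightarrow> nat) \<Rightarrow> (nat \<Rightarrow> nat) \<Rightarrow> bvec \<Rightarrow> bvec \<Rightarrow> real" where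
  "binner b m n X Y = (\<Sum>i=1..b. inner_blk m n i (X i) (Y i))"

definition beuc :: "nat \<Rightarrow> (nat \<Rightarrow> nat) \<Rightarrow> (nat \<Rightarrow> nat) \<Rightarrow> bvec \<Rightarrow> real" where
  "beuc b m n X = sqrt (binner b m n X X)"

definition is_norm_on_blk :: "(nat \<Rightarrow> nat) \<Rightarrow> (nat \<Rightarrow> nat) \<Rightarrow> nat \<Rightarrow> (mat \<Rightarrow> real) \<Rightarrow> bool" where
  "is_norm_on_blk m n i N \<longleftrightarrow>
     (\<forall>Z\<in>blk m n i. 0 \<le> N Z \<and> (N Z = 0 \<longleftrightarrow> Z = zmat)) \<and>
     (\<forall>Z\<in>blk m n i. \<forall>a. N (mscale a Z) = \<bar>a\<bar> * N Z) \<and>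
     (\<forall>Z\<in>blk m n i. \<forall>W\<in>blk m n i. N (madd Z W) \<le> N Z + N W)"

definition dual_norm :: "(nat \<Rightarrow> nat) \<Rightarrow> (nat \<Rightarrow> nat) \<Rightarrow> nat \<Rightarrow> (mat \<Rightarrow> real) \<Rightarrow> mat \<Rightarrow> real" where
  "dual_norm m n i N Y = Sup {inner_blk m n i Y Z | Z. Z \<in> blk m n i \<and> N Z \<le> 1}"

text \<open>f is continuously differentiable on the product space with gradient grad
  (Frechet differentiability w.r.t. the Euclidean (trace) norm, all norms being
  equivalent in finite dimension; gradient continuous).\<close>
definition cont_diff_grad :: "nat \<Rightarrow> (nat \<Rightarrow> nat) \<Rightarrow> (nat \<Rightarrow> nat) \<Rightarrow> (bvec \<Rightarrow> real) \<Rightarrow> (bvec \<Rightarrow> bvec) \<Rightarrow> bool" where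
  "cont_diff_grad b m n f grad \<longleftrightarrow>
     (\<forall>X\<in>bspace b m n. grad X \<in> bspace b m n) \<and>
     (\<forall>X\<in>bspace b m n. \<forall>e>0. \<exists>d>0. \<forall>H\<in>bspace b m n. beuc b m n H < d \<longrightarrow>
         \<bar>f (badd X H) - f X - binner b m n (grad X) H\<bar> \<le> e * beuc b m n H) \<and>
     (\<forall>X\<in>bspace b m n. \<forall>e>0. \<exists>d>0. \<forall>Y\<in>bspace b m n. beuc b m n (bsub Y X) < d \<longrightarrow>
         beuc b m n (bsub (grad Y) (grad X)) < e)"

definition is_sharp :: "(nat \<Rightarrow> nat) \<Rightarrow> (nat \<Rightarrow> nat) \<Rightarrow> nat \<Rightarrow> (mat \<Rightarrow> real) \<Rightarrow> mat \<Rightarrow> mat \<Rightarrow> bool" where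
  "is_sharp m n i N G Z0 \<longleftrightarrow> Z0 \<in> blk m n i \<and>
     (\<forall>Z\<in>blk m n i. inner_blk m n i G Z - N Z ^ 2 / 2 \<le> inner_blk m n i G Z0 - N Z0 ^ 2 / 2)"

definition upd :: "(bvec \<Rightarrow> bvec) \<Rightarrow> (nat \<Rightarrow> mat \<Rightarrow> mat) \<Rightarrow> (nat \<Rightarrow> nat set \<Rightarrow> real)
    \<Rightarrow> nat set \<Rightarrow> bvec \<Rightarrow> bvec" where
  "upd grad sharp L S X = (\<lambda>i. if i \<in> S then msub (X i) (mscale (1 / L i S) (sharp i (grad X i))) else X i)"

text \<open>Iterate after the sampled indices s_0,...,s_{k-1} (S^j = {s_j..b}).\<close>
definition iter :: "nat \<Rightarrow> (bvec \<Rightarrow> bvec) \<Rightarrow> (nat \<Rightarrow> mat \<Rightarrow> mat) \<Rightarrow> (nat \<Rightarrow> nat set \<Rightarrow> real)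
    \<Rightarrow> bvec \<Rightarrow> nat list \<Rightarrow> bvec" where
  "iter b grad sharp L X0 ss = foldl (\<lambda>X s. upd grad sharp L {s..b} X) X0 ss"

text \<open>Expectation of g(X^k): s_0,...,s_{k-1} i.i.d. with Pr(s=i) = p i.\<close>
definition expect_iter :: "nat \<Rightarrow> (nat \<Rightarrow> real) \<Rightarrow> (bvec \<Rightarrow> bvec) \<Rightarrow> (nat \<Rightarrow> mat \<Rightarrow> mat)
    \<Rightarrow> (nat \<Rightarrow> nat set \<Rightarrow> real) \<Rightarrow> bvec \<Rightarrow> nat \<Rightarrow> (bvec \<Rightarrow> real) \<Rightarrow> real" where
  "expect_iter b p grad sharp L X0 k g =
     (\<Sum>ss\<in>{ss. length ss = k \<and> set ss \<subseteq> {1..b}}.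
        (\<Prod>j<k. p (ss ! j)) * g (iter b grad sharp L X0 ss))"

end

theory Submission
  imports Defs
begin

(* Testing the maximality of the sharp operator against multiples of unit-ball vectors gives
   ||G||_*^2 <= 2 (<G, G#> - ||G#||^2 / 2), so layer-wise smoothness makes one step with
   active set {s..b} decrease f by at least the sum over i >= s of ||grad_i f||_*^2 / (2 L_{i,{s..b}}).
   Averaging over s and exchanging the sums over s <= i turns the expected decrease into
   the sum over i of w_i E ||grad_i f(X^k)||_*^2; telescoping over k and f >= f* give the
   bound, and p_1 > 0 makes the normalising weight positive. *)

lemma zmat_in_blk: "zmat \<in> blk m n i"
  by (simp add: blk_def zmat_def)

lemma mscale_in_blk: "Z \<in> blk m n i \<Longrightarrow> mscale a Z \<in> blk m n i"
  by (simp add: blk_def mscale_def)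

lemma msub_in_blk: "Z \<in> blk m n i \<Longrightarrow> W \<in> blk m n i \<Longrightarrow> msub Z W \<in> blk m n i"
  by (simp add: blk_def msub_def)

lemma inner_blk_zmat: "inner_blk m n i G zmat = 0"
  by (simp add: inner_blk_def zmat_def)

lemma inner_blk_mscale: "inner_blk m n i G (mscale a Z) = a * inner_blk m n i G Z"
  by (simp add: inner_blk_def mscale_def sum_distrib_left algebra_simps)

lemma dual_norm_sq_le_sharp_value:
  assumes norm: "is_norm_on_blk m n i N" and sharp: "is_sharp m n i N G Z0"
  shows "(dual_norm m n i N G)\<^sup>2 \<le> 2 * (inner_blk m n i G Z0 - N Z0 ^ 2 / 2)"
proof -
  define V where "V = inner_blk m n i G Z0 - N Z0 ^ 2 / 2"
  define A where "A = {inner_blk m n i G Z | Z. Z \<in> blk m n i \<and> N Z \<le> 1}"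
  have N_zmat: "N zmat = 0"
    using norm zmat_in_blk unfolding is_norm_on_blk_def by blast
  then have "0 \<in> A"
    unfolding A_def using zmat_in_blk inner_blk_zmat by fastforce
  have V_nonneg: "0 \<le> V"
    using sharp zmat_in_blk N_zmat inner_blk_zmat unfolding is_sharp_def V_def by fastforce
  have A_bound: "t \<le> sqrt (2 * V)" if "t \<in> A" for t
  proof (cases "t \<le> 0")
    case True
    then show ?thesis using V_nonneg by (meson order_trans real_sqrt_ge_zero zero_le_mult_iff zero_le_numeral)
  next
    case False
    obtain Z where Z: "Z \<in> blk m n i" "N Z \<le> 1" and t: "t = inner_blk m n i G Z"
      using \<open>t \<in> A\<close> unfolding A_def by blast
    \<comment> \<open>maximality of Z0 tested against t Z gives t^2/2 \<le> V\<close>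
    have "N (mscale t Z) = t * N Z" "0 \<le> N Z"
      using norm Z False unfolding is_norm_on_blk_def by auto
    then have "N (mscale t Z) ^ 2 \<le> t ^ 2"
      using Z False by (simp add: power_mono mult_left_le)
    moreover have "inner_blk m n i G (mscale t Z) - N (mscale t Z) ^ 2 / 2 \<le> V"
      using sharp mscale_in_blk[OF Z(1)] unfolding is_sharp_def V_def by blast
    ultimately have "t ^ 2 \<le> 2 * V"
      by (simp add: inner_blk_mscale t power2_eq_square)
    then show ?thesis by (rule real_le_rsqrt)
  qed
  have "Sup A \<le> sqrt (2 * V)"
    using A_bound \<open>0 \<in> A\<close> by (intro cSup_least) auto
  moreover have "0 \<le> Sup A"
    using A_bound \<open>0 \<in> A\<close> by (meson bdd_aboveI cSup_upper)
  ultimately have "(Sup A)\<^sup>2 \<le> 2 * V"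
    using V_nonneg by (metis power_mono real_sqrt_pow2 zero_le_mult_iff zero_le_numeral)
  then show ?thesis unfolding dual_norm_def A_def V_def .
qed

lemma sharp_step_model_le:
  assumes norm: "is_norm_on_blk m n i N" and sharp: "is_sharp m n i N G Z0" and l: "0 < l"
  shows "inner_blk m n i G (mscale (- (1 / l)) Z0) + l / 2 * N (mscale (- (1 / l)) Z0) ^ 2
    \<le> - (dual_norm m n i N G)\<^sup>2 / (2 * l)"
proof -
  have scaled_norm: "N (mscale (- (1 / l)) Z0) = N Z0 / l"
    using norm sharp l unfolding is_norm_on_blk_def is_sharp_def by auto
  have "inner_blk m n i G (mscale (- (1 / l)) Z0) + l / 2 * N (mscale (- (1 / l)) Z0) ^ 2
      = - (inner_blk m n i G Z0 - N Z0 ^ 2 / 2) / l"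
    unfolding scaled_norm inner_blk_mscale using l by (simp add: field_simps power2_eq_square)
  also have "\<dots> \<le> - (dual_norm m n i N G)\<^sup>2 / (2 * l)"
    using dual_norm_sq_le_sharp_value[OF norm sharp] l by (simp add: field_simps)
  finally show ?thesis .
qed

lemma binner_supported:
  assumes "S \<subseteq> {1..b}" and "\<forall>i. i \<notin> S \<longrightarrow> \<Gamma> i = zmat"
  shows "binner b m n Y \<Gamma> = (\<Sum>i\<in>S. inner_blk m n i (Y i) (\<Gamma> i))"
  unfolding binner_def using assms by (intro sum.mono_neutral_right) (auto simp: inner_blk_zmat)

lemma upd_descent:
  assumes S: "S \<subseteq> {1..b}"
    and norms: "\<forall>i\<in>S. is_norm_on_blk m n i (N i)"
    and sharp: "\<forall>i\<in>S. \<forall>G\<in>blk m n i. is_sharp m n i (N i) G (sharp i G)"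
    and L_pos: "\<forall>i\<in>S. 0 < L i S"
    and grad_X: "grad X \<in> bspace b m n"
    and smooth: "\<forall>\<Gamma>\<in>bspace b m n. (\<forall>i. i \<notin> S \<longrightarrow> \<Gamma> i = zmat) \<longrightarrow>
       f (badd X \<Gamma>) - f X - binner b m n (grad X) \<Gamma> \<le> (\<Sum>i\<in>S. L i S / 2 * N i (\<Gamma> i) ^ 2)"
  shows "f (upd grad sharp L S X) \<le> f X - (\<Sum>i\<in>S. (dual_norm m n i (N i) (grad X i))\<^sup>2 / (2 * L i S))"
proof -
  define \<Gamma> where "\<Gamma> = (\<lambda>i. if i \<in> S then mscale (- (1 / L i S)) (sharp i (grad X i)) else zmat)"
  have grad_blk: "grad X i \<in> blk m n i" if "i \<in> S" for i
    using grad_X S that unfolding bspace_def by auto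
  have sharp_i: "is_sharp m n i (N i) (grad X i) (sharp i (grad X i))" if "i \<in> S" for i
    using sharp grad_blk that by blast
  have \<Gamma>_support: "\<forall>i. i \<notin> S \<longrightarrow> \<Gamma> i = zmat"
    unfolding \<Gamma>_def by simp
  have "\<Gamma> \<in> bspace b m n"
    using S sharp_i unfolding bspace_def \<Gamma>_def is_sharp_def by (auto intro: mscale_in_blk zmat_in_blk)
  then have "f (badd X \<Gamma>) - f X - binner b m n (grad X) \<Gamma> \<le> (\<Sum>i\<in>S. L i S / 2 * N i (\<Gamma> i) ^ 2)"
    using smooth \<Gamma>_support by blast
  then have "f (badd X \<Gamma>) - f X \<le> (\<Sum>i\<in>S. inner_blk m n i (grad X i) (\<Gamma> i) + L i S / 2 * N i (\<Gamma> i) ^ 2)"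
    unfolding binner_supported[OF S \<Gamma>_support] sum.distrib by linarith
  also have "\<dots> \<le> (\<Sum>i\<in>S. - (dual_norm m n i (N i) (grad X i))\<^sup>2 / (2 * L i S))"
    using sharp_step_model_le norms sharp_i L_pos unfolding \<Gamma>_def by (intro sum_mono) auto
  finally have "f (badd X \<Gamma>) \<le> f X - (\<Sum>i\<in>S. (dual_norm m n i (N i) (grad X i))\<^sup>2 / (2 * L i S))"
    by (simp add: sum_negf)
  moreover have "badd X \<Gamma> = upd grad sharp L S X"
    unfolding \<Gamma>_def upd_def badd_def madd_def msub_def mscale_def zmat_def by auto
  ultimately show ?thesis by simp
qed

lemma sum_triangle_swap:
  fixes g :: "nat \<Rightarrow> nat \<Rightarrow> 'a::comm_monoid_add"
  shows "(\<Sum>s=a..b. \<Sum>i=s..b. g s i) = (\<Sum>i=a..b. \<Sum>s=a..i. g s i)"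
proof -
  have "(\<Sum>s=a..b. \<Sum>i\<in>{i. i \<in> {a..b} \<and> s \<le> i}. g s i) = (\<Sum>i=a..b. \<Sum>s\<in>{s. s \<in> {a..b} \<and> s \<le> i}. g s i)"
    by (rule sum.swap_restrict) auto
  moreover have "{i. i \<in> {a..b} \<and> s \<le> i} = {s..b}" if "s \<in> {a..b}" for s
    using that by auto
  moreover have "{s. s \<in> {a..b} \<and> s \<le> i} = {a..i}" if "i \<in> {a..b}" for i
    using that by auto
  ultimately show ?thesis by simp
qed

lemma averaged_progressive_descent:
  fixes F :: "nat \<Rightarrow> real" and c :: "nat \<Rightarrow> nat \<Rightarrow> real"
  assumes p_nonneg: "\<forall>s\<in>{1..b}. 0 \<le> p s" and p_sum: "(\<Sum>s=1..b. p s) = 1"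
    and descent: "\<And>s. s \<in> {1..b} \<Longrightarrow> 0 < p s \<Longrightarrow> F s \<le> F0 - (\<Sum>i=s..b. c s i)"
  shows "(\<Sum>s=1..b. p s * F s) \<le> F0 - (\<Sum>i=1..b. \<Sum>s=1..i. p s * c s i)"
proof -
  have "(\<Sum>s=1..b. p s * F s) \<le> (\<Sum>s=1..b. p s * (F0 - (\<Sum>i=s..b. c s i)))"
  proof (rule sum_mono)
    fix s assume s: "s \<in> {1..b}"
    have "0 \<le> p s" using p_nonneg s by blast
    then consider "p s = 0" | "0 < p s" by linarith
    then show "p s * F s \<le> p s * (F0 - (\<Sum>i=s..b. c s i))"
      by cases (simp_all add: descent[OF s] mult_left_mono)
  qed
  also have "\<dots> = F0 - (\<Sum>s=1..b. \<Sum>i=s..b. p s * c s i)"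
    using p_sum by (simp add: right_diff_distrib sum_subtractf sum_distrib_left flip: sum_distrib_right)
  also have "\<dots> = F0 - (\<Sum>i=1..b. \<Sum>s=1..i. p s * c s i)"
    by (simp only: sum_triangle_swap)
  finally show ?thesis .
qed

lemma lists_length_Suc_snoc:
  "{ss. length ss = Suc k \<and> set ss \<subseteq> A} = (\<lambda>(ss, s). ss @ [s]) ` ({ss. length ss = k \<and> set ss \<subseteq> A} \<times> A)"
proof
  show "{ss. length ss = Suc k \<and> set ss \<subseteq> A} \<subseteq> (\<lambda>(ss, s). ss @ [s]) ` ({ss. length ss = k \<and> set ss \<subseteq> A} \<times> A)"
  proof
    fix xs assume "xs \<in> {ss. length ss = Suc k \<and> set ss \<subseteq> A}"
    then show "xs \<in> (\<lambda>(ss, s). ss @ [s]) ` ({ss. length ss = k \<and> set ss \<subseteq> A} \<times> A)"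
      by (cases xs rule: rev_cases) force+
  qed
qed auto

lemma expect_iter_0: "expect_iter b p grad sharp L X0 0 g = g X0"
proof -
  have "{ss::nat list. length ss = 0 \<and> set ss \<subseteq> {1..b}} = {[]}" by auto
  then show ?thesis unfolding expect_iter_def by (simp add: iter_def)
qed

lemma expect_iter_Suc:
  "expect_iter b p grad sharp L X0 (Suc k) g =
     expect_iter b p grad sharp L X0 k (\<lambda>X. \<Sum>s=1..b. p s * g (upd grad sharp L {s..b} X))"
proof -
  let ?A = "{ss. length ss = k \<and> set ss \<subseteq> {1..b}}"
  let ?X = "iter b grad sharp L X0"
  have "expect_iter b p grad sharp L X0 (Suc k) g =
      (\<Sum>(ss, s)\<in>?A \<times> {1..b}. (\<Prod>j<Suc k. p ((ss @ [s]) ! j)) * g (?X (ss @ [s])))"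
    unfolding expect_iter_def lists_length_Suc_snoc
    by (subst sum.reindex) (auto intro: inj_onI simp: case_prod_beta)
  also have "\<dots> = (\<Sum>ss\<in>?A. \<Sum>s=1..b. (\<Prod>j<k. p (ss ! j)) * p s * g (upd grad sharp L {s..b} (?X ss)))"
    unfolding sum.cartesian_product[symmetric]
    by (intro sum.cong refl) (auto simp: prod.lessThan_Suc nth_append iter_def)
  also have "\<dots> = expect_iter b p grad sharp L X0 k (\<lambda>X. \<Sum>s=1..b. p s * g (upd grad sharp L {s..b} X))"
    unfolding expect_iter_def by (simp add: sum_distrib_left mult.assoc)
  finally show ?thesis .
qed

lemma expect_iter_diff:
  "expect_iter b p grad sharp L X0 k (\<lambda>X. g X - h X) =
     expect_iter b p grad sharp L X0 k g - expect_iter b p grad sharp L X0 k h"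
  unfolding expect_iter_def by (simp add: right_diff_distrib sum_subtractf)

lemma expect_iter_sum:
  "expect_iter b p grad sharp L X0 k (\<lambda>X. \<Sum>i\<in>I. c i * g i X) =
     (\<Sum>i\<in>I. c i * expect_iter b p grad sharp L X0 k (g i))"
  unfolding expect_iter_def
  by (simp add: sum_distrib_left sum_distrib_right mult_ac) (rule sum.swap)

lemma upd_in_bspace:
  assumes "X \<in> bspace b m n" "grad X \<in> bspace b m n" "S \<subseteq> {1..b}"
    and "\<forall>i\<in>{1..b}. \<forall>G\<in>blk m n i. sharp i G \<in> blk m n i"
  shows "upd grad sharp L S X \<in> bspace b m n"
  using assms unfolding bspace_def upd_def by (auto intro!: msub_in_blk mscale_in_blk)

definition prog_weight :: "nat \<Rightarrow> (nat \<Rightarrow> real) \<Rightarrow> (nat \<Rightarrow> nat set \<Rightarrow> real) \<Rightarrow> nat \<Rightarrow> real" where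
  "prog_weight b p L i = (\<Sum>s=1..i. p s / (2 * L i {s..b}))"

lemma prog_weight_sum_pos:
  assumes b: "1 \<le> b" and p_nonneg: "\<forall>i\<in>{1..b}. 0 \<le> p i" and p1: "0 < p 1"
    and L_pos: "\<forall>s\<in>{1..b}. 0 < p s \<longrightarrow> (\<forall>i\<in>{s..b}. 0 < L i {s..b})"
  shows "0 < (\<Sum>i=1..b. prog_weight b p L i)"
proof (rule sum_pos2)
  show "0 < prog_weight b p L 1"
    using b p1 L_pos unfolding prog_weight_def by auto
  show "0 \<le> prog_weight b p L i" if "i \<in> {1..b}" for i
    unfolding prog_weight_def
  proof (rule sum_nonneg)
    fix s assume s: "s \<in> {1..i}"
    then have "0 \<le> p s" using p_nonneg that by auto
    then consider "p s = 0" | "0 < p s" by linarith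
    then show "0 \<le> p s / (2 * L i {s..b})"
      by cases (use L_pos s that in \<open>auto intro!: divide_nonneg_pos\<close>)
  qed
qed (use b in auto)

locale progressive_iteration =
  fixes b :: nat and m n :: "nat \<Rightarrow> nat" and p :: "nat \<Rightarrow> real"
    and grad :: "bvec \<Rightarrow> bvec" and sharp :: "nat \<Rightarrow> mat \<Rightarrow> mat"
    and L :: "nat \<Rightarrow> nat set \<Rightarrow> real" and X0 :: bvec
  assumes p_nonneg: "\<forall>i\<in>{1..b}. 0 \<le> p i"
    and p_sum: "(\<Sum>i=1..b. p i) = 1"
    and grad_in_bspace: "\<forall>X\<in>bspace b m n. grad X \<in> bspace b m n"
    and sharp_in_blk: "\<forall>i\<in>{1..b}. \<forall>G\<in>blk m n i. sharp i G \<in> blk m n i"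
    and X0_in_bspace: "X0 \<in> bspace b m n"
begin

abbreviation expect :: "nat \<Rightarrow> (bvec \<Rightarrow> real) \<Rightarrow> real" where
  "expect \<equiv> expect_iter b p grad sharp L X0"

lemma iter_in_bspace: "set ss \<subseteq> {1..b} \<Longrightarrow> iter b grad sharp L X0 ss \<in> bspace b m n"
proof (induction ss rule: rev_induct)
  case (snoc s ss)
  then show ?case
    using grad_in_bspace sharp_in_blk by (auto simp: iter_def intro!: upd_in_bspace)
qed (simp add: iter_def X0_in_bspace)

lemma expect_mono:
  assumes "\<And>X. X \<in> bspace b m n \<Longrightarrow> g X \<le> h X"
  shows "expect k g \<le> expect k h"
  unfolding expect_iter_def
proof (intro sum_mono mult_left_mono)
  fix ss assume ss: "ss \<in> {ss. length ss = k \<and> set ss \<subseteq> {1..b}}"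
  then show "g (iter b grad sharp L X0 ss) \<le> h (iter b grad sharp L X0 ss)"
    by (simp add: assms iter_in_bspace)
  show "0 \<le> (\<Prod>j<k. p (ss ! j))"
    using ss p_nonneg by (auto intro!: prod_nonneg dest!: nth_mem)
qed

lemma expect_const: "expect k (\<lambda>_. c) = c"
proof (induction k)
  case (Suc k)
  then show ?case
    using p_sum by (simp add: expect_iter_Suc flip: sum_distrib_right)
qed (simp add: expect_iter_0)

context
  fixes f :: "bvec \<Rightarrow> real" and d :: "nat \<Rightarrow> bvec \<Rightarrow> real"
  assumes descent: "\<And>s X. s \<in> {1..b} \<Longrightarrow> 0 < p s \<Longrightarrow> X \<in> bspace b m n \<Longrightarrow>
      f (upd grad sharp L {s..b} X) \<le> f X - (\<Sum>i=s..b. d i X / (2 * L i {s..b}))"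
begin

lemma expect_descent_step:
  "expect (Suc k) f \<le> expect k f - (\<Sum>i=1..b. prog_weight b p L i * expect k (d i))"
proof -
  have "expect (Suc k) f \<le> expect k (\<lambda>X. f X - (\<Sum>i=1..b. prog_weight b p L i * d i X))"
    unfolding expect_iter_Suc
  proof (rule expect_mono)
    fix X assume "X \<in> bspace b m n"
    then have "(\<Sum>s=1..b. p s * f (upd grad sharp L {s..b} X))
        \<le> f X - (\<Sum>i=1..b. \<Sum>s=1..i. p s * (d i X / (2 * L i {s..b})))"
      using p_nonneg p_sum descent by (intro averaged_progressive_descent) auto
    then show "(\<Sum>s=1..b. p s * f (upd grad sharp L {s..b} X))
        \<le> f X - (\<Sum>i=1..b. prog_weight b p L i * d i X)"
      by (simp add: prog_weight_def sum_distrib_right)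
  qed
  then show ?thesis
    by (simp only: expect_iter_diff expect_iter_sum)
qed

lemma sum_expected_decrease_le:
  assumes lower: "\<forall>X\<in>bspace b m n. fstar \<le> f X"
  shows "(\<Sum>k<K. \<Sum>i=1..b. prog_weight b p L i * expect k (d i)) \<le> f X0 - fstar"
proof -
  have telescope: "(\<Sum>k<K. \<Sum>i=1..b. prog_weight b p L i * expect k (d i)) \<le> f X0 - expect K f"
  proof (induction K)
    case (Suc K)
    then show ?case using expect_descent_step[of K] by simp
  qed (simp add: expect_iter_0)
  have "fstar \<le> expect K f"
    using expect_mono[of "\<lambda>_. fstar" f K] lower by (simp add: expect_const)
  with telescope show ?thesis by linarith
qed

end

end

theorem theorem1:
  fixes b :: nat and m n :: "nat \<Rightarrow> nat"
    and N :: "nat \<Rightarrow> mat \<Rightarrow> real"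
    and f :: "bvec \<Rightarrow> real" and grad :: "bvec \<Rightarrow> bvec" and fstar :: real
    and p :: "nat \<Rightarrow> real" and L :: "nat \<Rightarrow> nat set \<Rightarrow> real"
    and sharp :: "nat \<Rightarrow> mat \<Rightarrow> mat" and X0 :: bvec and K :: nat
  assumes b: "1 \<le> b"
    and norms: "\<forall>i\<in>{1..b}. is_norm_on_blk m n i (N i)"
    and diff: "cont_diff_grad b m n f grad"
    and lower: "\<forall>X\<in>bspace b m n. fstar \<le> f X"
    and p_nonneg: "\<forall>i\<in>{1..b}. 0 \<le> p i"
    and p_sum: "(\<Sum>i=1..b. p i) = 1"
    and p1: "0 < p 1"
    and L_nonneg: "\<forall>s\<in>{1..b}. 0 < p s \<longrightarrow> (\<forall>i\<in>{1..b}. 0 \<le> L i {s..b})"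
    and L_zero: "\<forall>s\<in>{1..b}. 0 < p s \<longrightarrow> (\<forall>i\<in>{1..b}. i \<notin> {s..b} \<longrightarrow> L i {s..b} = 0)"
    and L_pos: "\<forall>s\<in>{1..b}. 0 < p s \<longrightarrow> (\<forall>i\<in>{s..b}. 0 < L i {s..b})"
    and smooth: "\<forall>s\<in>{1..b}. 0 < p s \<longrightarrow>
       (\<forall>X\<in>bspace b m n. \<forall>\<Gamma>\<in>bspace b m n. (\<forall>i. i \<notin> {s..b} \<longrightarrow> \<Gamma> i = zmat) \<longrightarrow>
          f (badd X \<Gamma>) - f X - binner b m n (grad X) \<Gamma>
            \<le> (\<Sum>i\<in>{s..b}. L i {s..b} / 2 * N i (\<Gamma> i) ^ 2))"
    and sharp: "\<forall>i\<in>{1..b}. \<forall>G\<in>blk m n i. is_sharp m n i (N i) G (sharp i G)"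
    and X0: "X0 \<in> bspace b m n"
    and K: "1 \<le> K"
  shows "(let w = (\<lambda>i. \<Sum>s=1..i. p s / (2 * L i {s..b}));
              W = (1 / real b) * (\<Sum>j=1..b. w j)
          in (1 / real K) * (\<Sum>k<K. \<Sum>i=1..b. w i / W *
                expect_iter b p grad sharp L X0 k (\<lambda>X. (dual_norm m n i (N i) (grad X i))\<^sup>2))
             \<le> (f X0 - fstar) / (real K * W))"
proof -
  have grad_in_bspace: "\<forall>X\<in>bspace b m n. grad X \<in> bspace b m n"
    using diff unfolding cont_diff_grad_def by blast
  interpret progressive_iteration b m n p grad sharp L X0
    using p_nonneg p_sum grad_in_bspace sharp X0 unfolding is_sharp_def by unfold_locales blast+
  define w where "w = prog_weight b p L"
  have w_eq: "(\<lambda>i. \<Sum>s=1..i. p s / (2 * L i {s..b})) = w"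
    unfolding w_def prog_weight_def ..
  define W where "W = (1 / real b) * (\<Sum>j=1..b. w j)"
  define d where "d i X = (dual_norm m n i (N i) (grad X i))\<^sup>2" for i X
  have "f (upd grad sharp L {s..b} X) \<le> f X - (\<Sum>i=s..b. d i X / (2 * L i {s..b}))"
    if "s \<in> {1..b}" "0 < p s" "X \<in> bspace b m n" for s X
    unfolding d_def using that norms sharp L_pos smooth grad_in_bspace by (intro upd_descent) auto
  then have "(\<Sum>k<K. \<Sum>i=1..b. w i * expect k (d i)) \<le> f X0 - fstar"
    unfolding w_def using lower by (rule sum_expected_decrease_le)
  moreover have "0 < W"
    using prog_weight_sum_pos[OF b p_nonneg p1 L_pos] b unfolding W_def w_def by simp
  ultimately have "(\<Sum>k<K. \<Sum>i=1..b. w i * expect k (d i)) / (real K * W) \<le> (f X0 - fstar) / (real K * W)"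
    using K by (intro divide_right_mono) auto
  then show ?thesis
    unfolding Let_def w_eq W_def[symmetric] d_def[symmetric]
    by (simp add: sum_divide_distrib field_simps)
qed

end
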